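(* Let $\rho_{AB}$ be positive semidefinite on $\mathcal{H}_A\otimes\mathcal{H}_B$ with $0<\operatorname{tr}\rho_{AB}\le1$, and let $\sigma_B$ be a normalized density operator on $\mathcal{H}_B$. Then $$D_{\max}(\rho_{AB}\|\mathbb{1}_A\otimes\sigma_B)\ge\log\Gamma_C(\rho_{AB}|\sigma_B)-\log\operatorname{tr}\rho_{AB}.$$
   Context: Hilbert spaces are finite-dimensional; $\log$ is binary; inverses are generalized inverses (on the support). $D_{\max}(\rho\|\tau)=\inf\{\lambda\in\mathbb{R}:\rho\le2^\lambda\tau\}$. $\Gamma_C(\rho_{AB}|\sigma_B):=\operatorname{tr}\big((\rho_{AB}(\mathbb{1}_A\otimes\sigma_B^{-1/2}))^2\big)$. *)

theory Defs
  imports "HOL-Library.Extended_Real" "Jordan_Normal_Form.Matrix"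
begin

definition trace :: "complex mat \<Rightarrow> complex" where
  "trace A = (\<Sum>i<dim_row A. A $$ (i,i))"

definition adj :: "complex mat \<Rightarrow> complex mat" where
  "adj A = mat (dim_col A) (dim_row A) (\<lambda>(i,j). cnj (A $$ (j,i)))"

definition psd :: "nat \<Rightarrow> complex mat \<Rightarrow> bool" where
  "psd n A \<longleftrightarrow> A \<in> carrier_mat n n \<and>
     (\<forall>v \<in> carrier_vec n. let q = map_vec cnj v \<bullet> (A *\<^sub>v v) in Im q = 0 \<and> Re q \<ge> 0)"

definition loewner_le :: "nat \<Rightarrow> complex mat \<Rightarrow> complex mat \<Rightarrow> bool" where
  "loewner_le n A B \<longleftrightarrow> A \<in> carrier_mat n n \<and> B \<in> carrier_mat n n \<and> psd n (B - A)"

(* Kronecker (tensor) product, H_A \<otimes> H_B with index (a,b) \<mapsto> a * dim_B + b *)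
definition kron :: "complex mat \<Rightarrow> complex mat \<Rightarrow> complex mat" where
  "kron A B = mat (dim_row A * dim_row B) (dim_col A * dim_col B)
     (\<lambda>(i,j). A $$ (i div dim_row B, j div dim_col B) * B $$ (i mod dim_row B, j mod dim_col B))"

definition diag_real :: "nat \<Rightarrow> (nat \<Rightarrow> real) \<Rightarrow> complex mat" where
  "diag_real n d = mat n n (\<lambda>(i,j). if i = j then complex_of_real (d i) else 0)"

definition unitary :: "nat \<Rightarrow> complex mat \<Rightarrow> bool" where
  "unitary n U \<longleftrightarrow> U \<in> carrier_mat n n \<and> U * adj U = 1\<^sub>m n \<and> adj U * U = 1\<^sub>m n"

(* generalized inverse square root (inverse on the support), via spectral decomposition *)
definition inv_sqrt :: "complex mat \<Rightarrow> complex mat" where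
  "inv_sqrt S = (SOME X. \<exists>U d. unitary (dim_row S) U \<and>
       S = U * diag_real (dim_row S) d * adj U \<and>
       X = U * diag_real (dim_row S) (\<lambda>i. if d i > 0 then 1 / sqrt (d i) else 0) * adj U)"

definition D_max :: "nat \<Rightarrow> complex mat \<Rightarrow> complex mat \<Rightarrow> ereal" where
  "D_max n \<rho> \<tau> = Inf {ereal l | l. loewner_le n \<rho> (complex_of_real (2 powr l) \<cdot>\<^sub>m \<tau>)}"

definition Gamma_C :: "nat \<Rightarrow> complex mat \<Rightarrow> complex mat \<Rightarrow> complex" where
  "Gamma_C dA \<rho> \<sigma> = (let M = \<rho> * kron (1\<^sub>m dA) (inv_sqrt \<sigma>) in trace (M * M))"

end

(*
  Diagonalise \<rho> = \<Sum>\<^sub>i e\<^sub>i |v\<^sub>i\<rangle>\<langle>v\<^sub>i| and put Y = 1 \<otimes> \<sigma>\<^sup>-\<^sup>1\<^sup>/\<^sup>2, so that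
  \<Gamma>\<^sub>C = tr ((\<rho>Y)\<^sup>2) = \<Sum>\<^sub>i e\<^sub>i \<langle>Yv\<^sub>i, \<rho> Yv\<^sub>i\<rangle>.  If \<rho> \<le> 2\<^sup>\<lambda> (1 \<otimes> \<sigma>), every term is at most
  2\<^sup>\<lambda> \<langle>Yv\<^sub>i, (1 \<otimes> \<sigma>) Yv\<^sub>i\<rangle> \<le> 2\<^sup>\<lambda>, because Y (1 \<otimes> \<sigma>) Y is the projection onto the support
  of 1 \<otimes> \<sigma>; hence \<Gamma>\<^sub>C \<le> 2\<^sup>\<lambda> tr \<rho>.  The same operator inequality puts the support of \<rho>
  inside that of 1 \<otimes> \<sigma>, which makes \<Gamma>\<^sub>C > 0, so taking logarithms gives
  \<lambda> \<ge> log \<Gamma>\<^sub>C - log tr \<rho> for every admissible \<lambda>.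
*)

theory Submission
  imports Defs "Jordan_Normal_Form.Spectral_Radius"
begin

section \<open>Adjoints, sesquilinear forms and traces\<close>

lemma adj_carrier [simp]: "A \<in> carrier_mat r c \<Longrightarrow> adj A \<in> carrier_mat c r"
  unfolding adj_def by auto

lemma adj_dims [simp]: "dim_row (adj A) = dim_col A" "dim_col (adj A) = dim_row A"
  unfolding adj_def by auto

lemma index_adj [simp]:
  "i < dim_col A \<Longrightarrow> j < dim_row A \<Longrightarrow> adj A $$ (i,j) = cnj (A $$ (j,i))"
  unfolding adj_def by auto

lemma adj_adj [simp]: "adj (adj A) = A"
  by (rule eq_matI) auto

lemma adj_mult:
  assumes "A \<in> carrier_mat n m" "B \<in> carrier_mat m p"
  shows "adj (A * B) = adj B * adj A"
  using assms by (intro eq_matI) (auto simp: scalar_prod_def mult.commute)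

lemma diag_real_dims [simp]: "dim_row (diag_real n h) = n" "dim_col (diag_real n h) = n"
  unfolding diag_real_def by auto

lemma diag_real_carrier [simp]: "diag_real n h \<in> carrier_mat n n"
  unfolding carrier_mat_def by simp

lemma adj_diag_real [simp]: "adj (diag_real n d) = diag_real n d"
  unfolding diag_real_def by (rule eq_matI) auto

lemma one_mat_diag_real: "1\<^sub>m n = diag_real n (\<lambda>_. 1)"
  unfolding diag_real_def by (rule eq_matI) auto

lemma diag_real_mult_vec:
  assumes u: "u \<in> carrier_vec n"
  shows "diag_real n h *\<^sub>v u = vec n (\<lambda>k. complex_of_real (h k) * u$k)"
proof (rule eq_vecI)
  fix k assume "k < dim_vec (vec n (\<lambda>k. complex_of_real (h k) * u$k))"
  hence k: "k < n" by simp
  have "(diag_real n h *\<^sub>v u) $ k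
      = (\<Sum>i\<in>{0..<n}. (if k = i then complex_of_real (h k) else 0) * u $ i)"
    using k u by (simp add: diag_real_def scalar_prod_def)
  also have "\<dots> = (\<Sum>i\<in>{0..<n}. if k = i then complex_of_real (h k) * u $ k else 0)"
    by (rule sum.cong) auto
  also have "\<dots> = complex_of_real (h k) * u$k"
    using k by simp
  finally show "(diag_real n h *\<^sub>v u) $ k = vec n (\<lambda>k. complex_of_real (h k) * u$k) $ k"
    using k by simp
qed (auto simp: diag_real_def)

lemma trace_diag_real_mult:
  assumes G: "G \<in> carrier_mat n n"
  shows "trace (diag_real n e * G) = (\<Sum>i<n. complex_of_real (e i) * G $$ (i,i))"
proof -
  have "(diag_real n e * G) $$ (i,i) = complex_of_real (e i) * G $$ (i,i)" if i: "i < n" for i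
  proof -
    have "(diag_real n e * G) $$ (i,i) = (diag_real n e *\<^sub>v col G i) $ i"
      using G i by (simp add: diag_real_def)
    thus ?thesis unfolding diag_real_mult_vec[OF col_carrier_vec[OF i G]] using G i by simp
  qed
  thus ?thesis unfolding trace_def by (simp add: diag_real_def)
qed

lemma trace_mult_comm:
  assumes "A \<in> carrier_mat n m" "B \<in> carrier_mat m n"
  shows "trace (A * B) = trace (B * A)"
proof -
  have "trace (A * B) = (\<Sum>i<n. \<Sum>j<m. A$$(i,j) * B$$(j,i))"
    using assms by (simp add: trace_def scalar_prod_def lessThan_atLeast0)
  also have "\<dots> = (\<Sum>j<m. \<Sum>i<n. B$$(j,i) * A$$(i,j))"
    by (subst sum.swap) (simp add: mult.commute)
  also have "\<dots> = trace (B * A)"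
    using assms by (simp add: trace_def scalar_prod_def lessThan_atLeast0)
  finally show ?thesis .
qed

abbreviation braket :: "complex vec \<Rightarrow> complex vec \<Rightarrow> complex" where
  "braket v w \<equiv> map_vec cnj v \<bullet> w"

lemma braket_mult_mat_vec:
  assumes A: "A \<in> carrier_mat n m" and v: "v \<in> carrier_vec n" and w: "w \<in> carrier_vec m"
  shows "braket v (A *\<^sub>v w) = (\<Sum>i<n. \<Sum>j<m. cnj (v$i) * A$$(i,j) * w$j)"
  using A v w by (simp add: scalar_prod_def lessThan_atLeast0 sum_distrib_left mult.assoc)

lemma braket_adj:
  assumes A: "A \<in> carrier_mat n m" and v: "v \<in> carrier_vec n" and w: "w \<in> carrier_vec m"
  shows "braket v (A *\<^sub>v w) = braket (adj A *\<^sub>v v) w"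
proof -
  have "braket v (A *\<^sub>v w) = (\<Sum>j<m. \<Sum>i<n. cnj (v$i) * A$$(i,j) * w$j)"
    using braket_mult_mat_vec[OF A v w] by (simp add: sum.swap[of _ "{..<m}"])
  also have "\<dots> = braket (adj A *\<^sub>v v) w"
    using A v w
    by (simp add: scalar_prod_def lessThan_atLeast0 sum_distrib_left sum_distrib_right mult_ac)
  finally show ?thesis .
qed

lemma index_adj_mult_vec:
  assumes V: "V \<in> carrier_mat n n" and i: "i < n"
  shows "(adj V *\<^sub>v y) $ i = braket (col V i) y"
proof -
  have "row (adj V) i = map_vec cnj (col V i)" using V i by (intro eq_vecI) auto
  thus ?thesis using V i by simp
qed

lemma index_adj_mult_mult_diag:
  assumes V: "V \<in> carrier_mat n n" and Z: "Z \<in> carrier_mat n n" and i: "i < n"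
  shows "(adj V * Z * V) $$ (i,i) = braket (col V i) (Z *\<^sub>v col V i)"
proof -
  have "(adj V * Z * V) $$ (i,i) = (adj V * (Z * V)) $$ (i,i)"
    using assoc_mult_mat[OF adj_carrier[OF V] Z V] by simp
  also have "\<dots> = (adj V *\<^sub>v (Z *\<^sub>v col V i)) $ i"
    using V Z i by simp
  also have "\<dots> = braket (col V i) (Z *\<^sub>v col V i)"
    by (rule index_adj_mult_vec[OF V i])
  finally show ?thesis .
qed

section \<open>Positive semidefinite matrices\<close>

definition hermitian :: "complex mat \<Rightarrow> bool" where
  "hermitian A \<longleftrightarrow> adj A = A"

lemma psdD:
  assumes "psd n A" "v \<in> carrier_vec n"
  shows "Re (braket v (A *\<^sub>v v)) \<ge> 0" "Im (braket v (A *\<^sub>v v)) = 0"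
  using assms unfolding psd_def Let_def by auto

lemma braket_two_point:
  fixes c :: complex
  assumes A: "A \<in> carrier_mat n n" and i: "i < n" and j: "j < n" and ij: "i \<noteq> j"
  defines "v \<equiv> vec n (\<lambda>k. if k = i then 1 else if k = j then c else 0)"
  shows "braket v (A *\<^sub>v v)
    = A$$(i,i) + c * A$$(i,j) + cnj c * A$$(j,i) + cnj c * c * A$$(j,j)"
proof -
  have v: "v \<in> carrier_vec n" unfolding v_def by simp
  have vk: "v$k = 0" if "k < n" "k \<notin> {i,j}" for k
    using that by (simp add: v_def)
  have "braket v (A *\<^sub>v v) = (\<Sum>k<n. \<Sum>l\<in>{i,j}. cnj (v$k) * A$$(k,l) * v$l)"
    unfolding braket_mult_mat_vec[OF A v v]
    by (rule sum.cong[OF refl], rule sum.mono_neutral_right) (use i j vk in auto)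
  also have "\<dots> = (\<Sum>k\<in>{i,j}. \<Sum>l\<in>{i,j}. cnj (v$k) * A$$(k,l) * v$l)"
    by (rule sum.mono_neutral_right) (use i j vk in auto)
  also have "\<dots> = A$$(i,i) + c * A$$(i,j) + cnj c * A$$(j,i) + cnj c * c * A$$(j,j)"
    using i j ij by (simp add: v_def algebra_simps)
  finally show ?thesis .
qed

lemma psd_hermitian:
  assumes psd: "psd n A"
  shows "hermitian A"
proof -
  have A: "A \<in> carrier_mat n n" using psd unfolding psd_def by auto
  have diag: "Im (A$$(i,i)) = 0" if i: "i < n" for i
  proof -
    have "map_vec cnj (unit_vec n i) = unit_vec n i"
      by (rule eq_vecI) (auto simp: unit_vec_def)
    hence "braket (unit_vec n i) (A *\<^sub>v unit_vec n i) = A$$(i,i)"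
      using A i by simp
    thus ?thesis using psdD(2)[OF psd, of "unit_vec n i"] i by simp
  qed
  have herm: "A$$(i,j) = cnj (A$$(j,i))" if i: "i < n" and j: "j < n" for i j
  proof (cases "i = j")
    case True
    thus ?thesis using diag[OF i] by (simp add: complex_eq_iff)
  next
    case False
    \<comment> \<open>the forms at \<open>e\<^sub>i + e\<^sub>j\<close> and \<open>e\<^sub>i + \<i> e\<^sub>j\<close> are real\<close>
    have "Im (braket (vec n (\<lambda>k. if k = i then 1 else if k = j then c else 0))
        (A *\<^sub>v vec n (\<lambda>k. if k = i then 1 else if k = j then c else 0))) = 0" for c
      by (rule psdD(2)[OF psd]) simp
    hence "Im (A$$(i,i) + c * A$$(i,j) + cnj c * A$$(j,i) + cnj c * c * A$$(j,j)) = 0" for c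
      unfolding braket_two_point[OF A i j False] .
    from this[of 1] this[of \<i>]
    show ?thesis using diag[OF i] diag[OF j] by (simp add: complex_eq_iff)
  qed
  show ?thesis unfolding hermitian_def
  proof (rule eq_matI)
    fix i j assume "i < dim_row A" "j < dim_col A"
    thus "adj A $$ (i,j) = A $$ (i,j)" using A herm[of i j] by simp
  qed (use A in auto)
qed

lemma braket_loewner_le:
  assumes le: "loewner_le n A (complex_of_real c \<cdot>\<^sub>m B)" and x: "x \<in> carrier_vec n"
  shows "Re (braket x (A *\<^sub>v x)) \<le> c * Re (braket x (B *\<^sub>v x))"
proof -
  have A: "A \<in> carrier_mat n n" and cB: "complex_of_real c \<cdot>\<^sub>m B \<in> carrier_mat n n"
    and psd: "psd n (complex_of_real c \<cdot>\<^sub>m B - A)"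
    using le unfolding loewner_le_def by auto
  have B: "B \<in> carrier_mat n n" using cB unfolding carrier_mat_def by simp
  have "braket x ((complex_of_real c \<cdot>\<^sub>m B - A) *\<^sub>v x)
      = complex_of_real c * braket x (B *\<^sub>v x) - braket x (A *\<^sub>v x)"
    unfolding braket_mult_mat_vec[OF minus_carrier_mat[OF A] x x] braket_mult_mat_vec[OF A x x]
      braket_mult_mat_vec[OF B x x]
    using A B by (simp add: algebra_simps sum_subtractf sum_distrib_left)
  thus ?thesis using psdD(1)[OF psd x] by simp
qed

section \<open>Unitary matrices\<close>

lemma unitaryD:
  assumes "unitary n U"
  shows "U \<in> carrier_mat n n" "adj U \<in> carrier_mat n n"
    and "U * adj U = 1\<^sub>m n" "adj U * U = 1\<^sub>m n"
  using assms unfolding unitary_def by auto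

lemma unitary_cancel:
  assumes U: "unitary n U" and X: "X \<in> carrier_mat n k"
  shows "U * (adj U * X) = X" "adj U * (U * X) = X"
proof -
  note u = unitaryD[OF U]
  have "U * (adj U * X) = (U * adj U) * X" using assoc_mult_mat[OF u(1) u(2) X] by simp
  thus "U * (adj U * X) = X" using u X by simp
  have "adj U * (U * X) = (adj U * U) * X" using assoc_mult_mat[OF u(2) u(1) X] by simp
  thus "adj U * (U * X) = X" using u X by simp
qed

lemma unitary_mult:
  assumes U: "unitary n U" and V: "unitary n V"
  shows "unitary n (U * V)"
proof -
  note u = unitaryD[OF U] and v = unitaryD[OF V]
  have a: "adj (U * V) = adj V * adj U" using u v by (simp add: adj_mult)
  have "U * V * adj (U * V) = U * (V * (adj V * adj U))" unfolding a
    using assoc_mult_mat[OF u(1) v(1) mult_carrier_mat[OF v(2) u(2)]] by simp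
  also have "\<dots> = 1\<^sub>m n" using unitary_cancel(1)[OF V u(2)] u by simp
  finally have 1: "U * V * adj (U * V) = 1\<^sub>m n" .
  have "adj (U * V) * (U * V) = adj V * (adj U * (U * V))" unfolding a
    using assoc_mult_mat[OF v(2) u(2) mult_carrier_mat[OF u(1) v(1)]] by simp
  also have "\<dots> = 1\<^sub>m n" using unitary_cancel(2)[OF U v(1)] v by simp
  finally have 2: "adj (U * V) * (U * V) = 1\<^sub>m n" .
  show ?thesis unfolding unitary_def using 1 2 u v by auto
qed

lemma unitary_normalized_cols:
  fixes ws :: "complex vec list"
  assumes ws: "set ws \<subseteq> carrier_vec n" "corthogonal ws" "length ws = n"
  defines "s \<equiv> \<lambda>j. complex_of_real (sqrt (Re (ws ! j \<bullet>c ws ! j)))"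
  shows "unitary n (mat n n (\<lambda>(i,j). (ws ! j) $ i / s j))"
proof -
  define W where "W = mat n n (\<lambda>(i,j). (ws ! j) $ i / s j)"
  have W: "W \<in> carrier_mat n n" unfolding W_def by auto
  have wsc: "ws ! j \<in> carrier_vec n" if "j < n" for j
    using ws that nth_mem by blast
  have s_sq: "ws ! j \<bullet>c ws ! j = s j * s j" and s0: "s j \<noteq> 0" if j: "j < n" for j
  proof -
    have "ws ! j \<bullet>c ws ! j \<noteq> 0" using corthogonalD[OF ws(2), of j j] ws(3) j by auto
    moreover have "ws ! j \<bullet>c ws ! j \<ge> 0" by (rule conjugate_square_ge_0_vec)
    ultimately have im: "Im (ws ! j \<bullet>c ws ! j) = 0" and re: "Re (ws ! j \<bullet>c ws ! j) > 0"
      by (auto simp: less_eq_complex_def complex_eq_iff)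
    have "s j * s j = complex_of_real (Re (ws ! j \<bullet>c ws ! j))"
      using re unfolding s_def of_real_mult[symmetric] by simp
    thus "ws ! j \<bullet>c ws ! j = s j * s j" using im by (simp add: complex_eq_iff)
    show "s j \<noteq> 0" using re unfolding s_def by simp
  qed
  have s_real: "cnj (s j) = s j" for j unfolding s_def by simp
  have "adj W * W = 1\<^sub>m n"
  proof (rule eq_matI)
    fix i j assume "i < dim_row (1\<^sub>m n)" "j < dim_col (1\<^sub>m n)"
    hence i: "i < n" and j: "j < n" by auto
    have "(adj W * W) $$ (i,j) = (\<Sum>k<n. cnj ((ws ! i) $ k / s i) * ((ws ! j) $ k / s j))"
      using i j W by (simp add: W_def scalar_prod_def lessThan_atLeast0)
    also have "\<dots> = (\<Sum>k<n. (ws ! j) $ k * cnj ((ws ! i) $ k)) / (s i * s j)"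
      unfolding sum_divide_distrib by (rule sum.cong) (simp_all add: s_real)
    also have "\<dots> = (ws ! j \<bullet>c ws ! i) / (s i * s j)"
      using wsc[OF i] wsc[OF j] by (simp add: scalar_prod_def lessThan_atLeast0)
    also have "\<dots> = 1\<^sub>m n $$ (i,j)"
    proof (cases "i = j")
      case True
      thus ?thesis using s_sq[OF i] s0[OF i] i by simp
    next
      case False
      thus ?thesis using corthogonalD[OF ws(2), of j i] ws(3) i j by simp
    qed
    finally show "(adj W * W) $$ (i,j) = 1\<^sub>m n $$ (i,j)" .
  qed (use W in auto)
  moreover from this have "W * adj W = 1\<^sub>m n"
    by (rule mat_mult_left_right_inverse[OF adj_carrier[OF W] W])
  ultimately show ?thesis using W unfolding unitary_def W_def by auto
qed

lemma unitary_with_first_col: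
  fixes v :: "complex vec"
  assumes v: "v \<in> carrier_vec n" and v0: "v \<noteq> 0\<^sub>v n"
  obtains W c where "unitary n W" "col W 0 = c \<cdot>\<^sub>v v"
proof -
  interpret cof_vec_space n "TYPE(complex)" .
  note bc = basis_completion[OF v v0]
  define ws where "ws = gram_schmidt n (basis_completion v)"
  note gs = gram_schmidt_result[OF bc(2) bc(4) bc(5) ws_def]
  have n0: "n > 0" using v0 v by (cases n) auto
  obtain vs where "basis_completion v = v # vs"
    using bc(6,7) n0 by (cases "basis_completion v") auto
  hence "hd ws = v" unfolding ws_def using v by simp
  moreover have "ws \<noteq> []" using gs(4) bc(6) n0 by auto
  ultimately have hd: "ws ! 0 = v" by (simp add: hd_conv_nth)
  define s where "s = complex_of_real (sqrt (Re (ws ! 0 \<bullet>c ws ! 0)))"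
  have "col (mat n n (\<lambda>(i,j). (ws ! j) $ i / complex_of_real (sqrt (Re (ws ! j \<bullet>c ws ! j))))) 0
    = (1 / s) \<cdot>\<^sub>v v"
    unfolding s_def using hd n0 v by (intro eq_vecI) auto
  thus thesis using that unitary_normalized_cols[OF gs(3) gs(2)] gs(4) bc(6) by auto
qed

abbreviation spectral_mat :: "nat \<Rightarrow> complex mat \<Rightarrow> (nat \<Rightarrow> real) \<Rightarrow> complex mat" where
  "spectral_mat n U d \<equiv> U * diag_real n d * adj U"

lemma spectral_mat_carrier:
  assumes "W \<in> carrier_mat n n"
  shows "spectral_mat n W h \<in> carrier_mat n n"
  using mult_carrier_mat[OF mult_carrier_mat[OF assms diag_real_carrier] adj_carrier[OF assms]] .

lemma adj_spectral_mat:
  assumes W: "W \<in> carrier_mat n n"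
  shows "adj (spectral_mat n W h) = spectral_mat n W h"
  using adj_mult[OF mult_carrier_mat[OF W diag_real_carrier] adj_carrier[OF W]]
    adj_mult[OF W diag_real_carrier] assoc_mult_mat[OF W diag_real_carrier adj_carrier[OF W]]
  by simp

lemma conj_spectral_mat:
  assumes W: "W \<in> carrier_mat n n" and P: "P \<in> carrier_mat n n"
  shows "W * spectral_mat n P d * adj W = spectral_mat n (W * P) d"
proof -
  have D: "diag_real n d \<in> carrier_mat n n" by simp
  have "spectral_mat n (W * P) d = W * (P * diag_real n d) * (adj P * adj W)"
    using adj_mult[OF W P] assoc_mult_mat[OF W P D] by simp
  also have "\<dots> = W * ((P * diag_real n d) * (adj P * adj W))"
    by (rule assoc_mult_mat[OF W mult_carrier_mat[OF P D]
          mult_carrier_mat[OF adj_carrier[OF P] adj_carrier[OF W]]])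
  also have "(P * diag_real n d) * (adj P * adj W) = spectral_mat n P d * adj W"
    by (rule assoc_mult_mat[OF mult_carrier_mat[OF P D] adj_carrier[OF P] adj_carrier[OF W],
          symmetric])
  also have "W * (spectral_mat n P d * adj W) = W * spectral_mat n P d * adj W"
    by (rule assoc_mult_mat[OF W mult_carrier_mat[OF mult_carrier_mat[OF P D] adj_carrier[OF P]]
          adj_carrier[OF W], symmetric])
  finally show ?thesis by simp
qed

lemma unitary_conj_inverse:
  assumes W: "unitary n W" and A: "A \<in> carrier_mat n n" and B: "adj W * A * W = B"
  shows "A = W * B * adj W"
proof -
  note w = unitaryD[OF W]
  have B': "B \<in> carrier_mat n n" using w A unfolding B[symmetric] by auto
  have "W * B * adj W = W * (B * adj W)" using w B' by (intro assoc_mult_mat) auto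
  also have "B * adj W = adj W * A * (W * adj W)"
    unfolding B[symmetric] using w A by (intro assoc_mult_mat) auto
  also have "\<dots> = adj W * A"
    using w A by simp
  also have "W * (adj W * A) = A" by (rule unitary_cancel(1)[OF W A])
  finally show ?thesis by simp
qed

lemma spectral_mat_one:
  assumes "unitary n W"
  shows "spectral_mat n W (\<lambda>_. 1) = 1\<^sub>m n"
  using unitaryD[OF assms] unfolding one_mat_diag_real[symmetric] by simp

lemma spectral_mat_mult_vec:
  assumes W: "W \<in> carrier_mat n n" and x: "x \<in> carrier_vec n"
  shows "spectral_mat n W h *\<^sub>v x = W *\<^sub>v (diag_real n h *\<^sub>v (adj W *\<^sub>v x))"
proof -
  have "spectral_mat n W h *\<^sub>v x = (W * diag_real n h) *\<^sub>v (adj W *\<^sub>v x)"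
    by (rule assoc_mult_mat_vec[OF mult_carrier_mat[OF W diag_real_carrier] adj_carrier[OF W] x])
  also have "\<dots> = W *\<^sub>v (diag_real n h *\<^sub>v (adj W *\<^sub>v x))"
    by (rule assoc_mult_mat_vec[OF W diag_real_carrier mult_mat_vec_carrier[OF adj_carrier[OF W] x]])
  finally show ?thesis .
qed

lemma adj_mult_spectral_mat_mult_vec:
  assumes W: "unitary n W" and x: "x \<in> carrier_vec n"
  shows "adj W *\<^sub>v (spectral_mat n W h *\<^sub>v x) = diag_real n h *\<^sub>v (adj W *\<^sub>v x)"
proof -
  note w = unitaryD[OF W]
  have u: "diag_real n h *\<^sub>v (adj W *\<^sub>v x) \<in> carrier_vec n"
    using mult_mat_vec_carrier[OF diag_real_carrier mult_mat_vec_carrier[OF w(2) x]] .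
  have "adj W *\<^sub>v (W *\<^sub>v (diag_real n h *\<^sub>v (adj W *\<^sub>v x)))
      = (adj W * W) *\<^sub>v (diag_real n h *\<^sub>v (adj W *\<^sub>v x))"
    by (rule assoc_mult_mat_vec[OF w(2) w(1) u, symmetric])
  thus ?thesis unfolding spectral_mat_mult_vec[OF w(1) x] using w u by simp
qed

section \<open>The spectral theorem for Hermitian matrices\<close>

lemma hermitian_conj:
  assumes W: "W \<in> carrier_mat n n" and A: "A \<in> carrier_mat n n" and hA: "hermitian A"
  shows "hermitian (adj W * A * W)"
proof -
  have "adj (adj W * A * W) = adj W * adj (adj W * A)"
    by (rule adj_mult[OF mult_carrier_mat[OF adj_carrier[OF W] A] W])
  also have "adj (adj W * A) = A * W"
    using adj_mult[OF adj_carrier[OF W] A] hA unfolding hermitian_def by simp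
  finally show ?thesis
    unfolding hermitian_def using assoc_mult_mat[OF adj_carrier[OF W] A W] by simp
qed

lemma index_unitary_conj_eigen_col:
  assumes W: "unitary n W" and A: "A \<in> carrier_mat n n" and i: "i < n" and j: "j < n"
    and eigen: "A *\<^sub>v col W j = \<mu> \<cdot>\<^sub>v col W j"
  shows "(adj W * A * W) $$ (i,j) = (if i = j then \<mu> else 0)"
proof -
  note w = unitaryD[OF W]
  have "(adj W * A * W) $$ (i,j) = (adj W * (A * W)) $$ (i,j)"
    using assoc_mult_mat[OF w(2) A w(1)] by simp
  also have "\<dots> = row (adj W) i \<bullet> col (A * W) j" using w A i j by simp
  also have "col (A * W) j = \<mu> \<cdot>\<^sub>v col W j" using w A j eigen by simp
  also have "row (adj W) i \<bullet> (\<mu> \<cdot>\<^sub>v col W j) = \<mu> * (row (adj W) i \<bullet> col W j)"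
    using w i j by simp
  also have "row (adj W) i \<bullet> col W j = (adj W * W) $$ (i,j)"
    by (subst index_mult_mat(1)) (use w i j in auto)
  finally show ?thesis using w i j by simp
qed

lemma hermitian_unitary_deflation:
  assumes A: "A \<in> carrier_mat (Suc m) (Suc m)" and hA: "hermitian A"
  obtains W e B where "unitary (Suc m) W" "B \<in> carrier_mat m m" "hermitian B"
    "adj W * A * W = four_block_mat (mat 1 1 (\<lambda>_. complex_of_real e)) (0\<^sub>m 1 m) (0\<^sub>m m 1) B"
proof -
  obtain \<mu> where "eigenvalue A \<mu>"
    using spectrum_non_empty[OF A] unfolding spectrum_def by auto
  hence "eigenvector A (find_eigenvector A \<mu>) \<mu>" by (rule find_eigenvector[OF A])
  then obtain v where v: "v \<in> carrier_vec (Suc m)" "v \<noteq> 0\<^sub>v (Suc m)" "A *\<^sub>v v = \<mu> \<cdot>\<^sub>v v"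
    unfolding eigenvector_def using A by auto
  obtain W c where W: "unitary (Suc m) W" and cW: "col W 0 = c \<cdot>\<^sub>v v"
    using unitary_with_first_col[OF v(1,2)] by blast
  note w = unitaryD[OF W]
  define A' where "A' = adj W * A * W"
  have A': "A' \<in> carrier_mat (Suc m) (Suc m)" unfolding A'_def using w A by auto
  have hA': "adj A' = A'"
    using hermitian_conj[OF w(1) A hA] unfolding A'_def hermitian_def .
  have "A *\<^sub>v col W 0 = \<mu> \<cdot>\<^sub>v col W 0"
    using A v(1,3) cW by (simp add: mult_mat_vec smult_smult_assoc mult.commute)
  hence col0: "A' $$ (i,0) = (if i = 0 then \<mu> else 0)" if "i < Suc m" for i
    unfolding A'_def using index_unitary_conj_eigen_col[OF W A that] by simp
  have \<mu>_real: "\<mu> = complex_of_real (Re \<mu>)"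
    using arg_cong[OF hA', of "\<lambda>M. M $$ (0,0)"] col0[of 0] A' by (simp add: complex_eq_iff)
  have row0: "A' $$ (0,j) = (if j = 0 then \<mu> else 0)" if j: "j < Suc m" for j
    using arg_cong[OF hA', of "\<lambda>M. M $$ (0,j)"] col0[OF j] A' j \<mu>_real
    by (auto simp: complex_eq_iff)
  define B where "B = mat m m (\<lambda>(i,j). A' $$ (Suc i, Suc j))"
  have "hermitian B" unfolding hermitian_def
  proof (rule eq_matI)
    fix i j assume "i < dim_row B" "j < dim_col B"
    thus "adj B $$ (i,j) = B $$ (i,j)"
      using arg_cong[OF hA', of "\<lambda>M. M $$ (Suc i, Suc j)"] A' by (simp add: B_def)
  qed (auto simp: B_def)
  moreover have "A' = four_block_mat (mat 1 1 (\<lambda>_. complex_of_real (Re \<mu>))) (0\<^sub>m 1 m) (0\<^sub>m m 1) B"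
    unfolding B_def using A' col0 row0 \<mu>_real by (intro eq_matI) auto
  moreover have "B \<in> carrier_mat m m" unfolding B_def by simp
  ultimately show thesis using that[OF W] unfolding A'_def by blast
qed

lemma adj_four_block_one:
  assumes "U \<in> carrier_mat m m"
  shows "adj (four_block_mat (1\<^sub>m 1) (0\<^sub>m 1 m) (0\<^sub>m m 1) U)
    = four_block_mat (1\<^sub>m 1) (0\<^sub>m 1 m) (0\<^sub>m m 1) (adj U)"
  using assms by (intro eq_matI) auto

lemma unitary_four_block_one:
  assumes U: "unitary m U"
  shows "unitary (Suc m) (four_block_mat (1\<^sub>m 1) (0\<^sub>m 1 m) (0\<^sub>m m 1) U)"
proof -
  note u = unitaryD[OF U]
  let ?B = "four_block_mat (1\<^sub>m 1 :: complex mat) (0\<^sub>m 1 m) (0\<^sub>m m 1)"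
  have z: "(0\<^sub>m 1 m :: complex mat) \<in> carrier_mat 1 m" "(0\<^sub>m m 1 :: complex mat) \<in> carrier_mat m 1"
    and o: "(1\<^sub>m 1 :: complex mat) \<in> carrier_mat 1 1" by auto
  have "?B U * ?B (adj U) = 1\<^sub>m (Suc m)"
    by (subst mult_four_block_mat[OF o z u(1) o z u(2)]) (use u in simp)
  moreover have "?B (adj U) * ?B U = 1\<^sub>m (Suc m)"
    by (subst mult_four_block_mat[OF o z u(2) o z u(1)]) (use u in simp)
  ultimately show ?thesis
    unfolding unitary_def adj_four_block_one[OF u(1)] using u(1) by auto
qed

lemma four_block_spectral_mat:
  assumes U: "unitary m U"
  defines "P \<equiv> four_block_mat (1\<^sub>m 1) (0\<^sub>m 1 m) (0\<^sub>m m 1) U"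
  shows "four_block_mat (mat 1 1 (\<lambda>_. complex_of_real e)) (0\<^sub>m 1 m) (0\<^sub>m m 1) (spectral_mat m U d)
    = spectral_mat (Suc m) P (\<lambda>i. if i = 0 then e else d (i - 1))"
proof -
  note u = unitaryD[OF U]
  define E where "E = (mat 1 1 (\<lambda>_. complex_of_real e) :: complex mat)"
  have E: "E \<in> carrier_mat 1 1" and D: "diag_real m d \<in> carrier_mat m m"
    and z: "(0\<^sub>m 1 m :: complex mat) \<in> carrier_mat 1 m" "(0\<^sub>m m 1 :: complex mat) \<in> carrier_mat m 1"
    and o: "(1\<^sub>m 1 :: complex mat) \<in> carrier_mat 1 1"
    unfolding E_def diag_real_def by auto
  have "diag_real (Suc m) (\<lambda>i. if i = 0 then e else d (i - 1))
    = four_block_mat E (0\<^sub>m 1 m) (0\<^sub>m m 1) (diag_real m d)"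
    unfolding E_def diag_real_def by (intro eq_matI) auto
  moreover have "spectral_mat (Suc m) P (\<lambda>i. if i = 0 then e else d (i - 1))
      = P * (diag_real (Suc m) (\<lambda>i. if i = 0 then e else d (i - 1)) * adj P)"
    unfolding P_def using u(1) by (intro assoc_mult_mat) (auto simp: diag_real_def)
  moreover have "four_block_mat E (0\<^sub>m 1 m) (0\<^sub>m m 1) (diag_real m d) * adj P
      = four_block_mat E (0\<^sub>m 1 m) (0\<^sub>m m 1) (diag_real m d * adj U)"
    unfolding P_def adj_four_block_one[OF u(1)]
    by (subst mult_four_block_mat[OF E z D o z u(2)])
      (use E u in \<open>simp add: left_add_zero_mat[OF mult_carrier_mat[OF D u(2)]]\<close>)
  moreover have "P * four_block_mat E (0\<^sub>m 1 m) (0\<^sub>m m 1) (diag_real m d * adj U)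
      = four_block_mat E (0\<^sub>m 1 m) (0\<^sub>m m 1) (spectral_mat m U d)"
    unfolding P_def
    by (subst mult_four_block_mat[OF o z u(1) E z mult_carrier_mat[OF D u(2)]])
      (use E u in \<open>simp add: assoc_mult_mat[OF u(1) D u(2)]
        left_add_zero_mat[OF mult_carrier_mat[OF u(1) mult_carrier_mat[OF D u(2)]]]\<close>)
  ultimately have "spectral_mat (Suc m) P (\<lambda>i. if i = 0 then e else d (i - 1))
      = four_block_mat E (0\<^sub>m 1 m) (0\<^sub>m m 1) (spectral_mat m U d)"
    by simp
  thus ?thesis unfolding E_def by simp
qed

theorem hermitian_spectral_decomposition:
  assumes "A \<in> carrier_mat n n" and "hermitian A"
  shows "\<exists>U d. unitary n U \<and> A = spectral_mat n U d"
  using assms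
proof (induction n arbitrary: A)
  case 0
  thus ?case
    by (intro exI[of _ "1\<^sub>m 0"] exI[of _ "\<lambda>_. 0"])
      (auto simp: unitary_def diag_real_def intro!: eq_matI)
next
  case (Suc m A)
  obtain W e B where W: "unitary (Suc m) W" and B: "B \<in> carrier_mat m m" "hermitian B"
    and WAW: "adj W * A * W = four_block_mat (mat 1 1 (\<lambda>_. complex_of_real e)) (0\<^sub>m 1 m) (0\<^sub>m m 1) B"
    using hermitian_unitary_deflation[OF Suc.prems] .
  obtain U d where U: "unitary m U" and BU: "B = spectral_mat m U d"
    using Suc.IH[OF B] by blast
  define P where "P = four_block_mat (1\<^sub>m 1) (0\<^sub>m 1 m) (0\<^sub>m m 1) U"
  define d' where "d' = (\<lambda>i. if i = 0 then e else d (i - 1))"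
  have P: "unitary (Suc m) P" unfolding P_def by (rule unitary_four_block_one[OF U])
  have "A = W * spectral_mat (Suc m) P d' * adj W"
    using unitary_conj_inverse[OF W Suc.prems(1) WAW]
    unfolding BU four_block_spectral_mat[OF U] P_def d'_def .
  also have "\<dots> = spectral_mat (Suc m) (W * P) d'"
    by (rule conj_spectral_mat[OF unitaryD(1)[OF W] unitaryD(1)[OF P]])
  finally show ?case using unitary_mult[OF W P] by blast
qed

section \<open>Quadratic forms and traces in an eigenbasis\<close>

lemma braket_spectral_mat:
  assumes W: "unitary n W" and v: "v \<in> carrier_vec n"
  shows "braket v (spectral_mat n W h *\<^sub>v v)
       = complex_of_real (\<Sum>k<n. h k * (cmod ((adj W *\<^sub>v v)$k))\<^sup>2)"
proof -
  note w = unitaryD[OF W]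
  define u where "u = adj W *\<^sub>v v"
  have u: "u \<in> carrier_vec n" unfolding u_def using mult_mat_vec_carrier[OF w(2) v] .
  have "braket v (spectral_mat n W h *\<^sub>v v) = braket (adj W *\<^sub>v v) (diag_real n h *\<^sub>v u)"
    unfolding spectral_mat_mult_vec[OF w(1) v] u_def
    by (rule braket_adj[OF w(1) v mult_mat_vec_carrier[OF diag_real_carrier u[unfolded u_def]]])
  also have "\<dots> = (\<Sum>k<n. cnj (u$k) * (complex_of_real (h k) * u$k))"
    unfolding u_def[symmetric] diag_real_mult_vec[OF u] using u by (simp add: scalar_prod_def lessThan_atLeast0)
  also have "\<dots> = (\<Sum>k<n. complex_of_real (h k * (cmod (u$k))\<^sup>2))"
  proof (rule sum.cong[OF refl])
    fix k
    have "cnj (u$k) * (complex_of_real (h k) * u$k) = complex_of_real (h k) * (u$k * cnj (u$k))"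
      by (simp add: mult_ac)
    thus "cnj (u$k) * (complex_of_real (h k) * u$k) = complex_of_real (h k * (cmod (u$k))\<^sup>2)"
      by (simp only: complex_norm_square[symmetric] of_real_mult)
  qed
  also have "\<dots> = complex_of_real (\<Sum>k<n. h k * (cmod (u$k))\<^sup>2)"
    by simp
  finally show ?thesis unfolding u_def .
qed

lemma braket_col_spectral_mat_col:
  assumes W: "unitary n W" and i: "i < n"
  shows "braket (col W i) (spectral_mat n W h *\<^sub>v col W i) = complex_of_real (h i)"
proof -
  note w = unitaryD[OF W]
  have "adj W *\<^sub>v col W i = unit_vec n i"
    using col_mult2[OF w(2) w(1) i] w i by simp
  hence "(\<Sum>k<n. h k * (cmod ((adj W *\<^sub>v col W i)$k))\<^sup>2) = (\<Sum>k<n. if k = i then h i else 0)"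
    by (intro sum.cong) (auto simp: unit_vec_def)
  also have "\<dots> = h i" using i by simp
  finally show ?thesis unfolding braket_spectral_mat[OF W col_carrier_vec[OF i w(1)]] by simp
qed

lemma braket_col_col_unitary:
  assumes W: "unitary n W" and i: "i < n"
  shows "braket (col W i) (col W i) = 1"
  using braket_col_spectral_mat_col[OF W i, of "\<lambda>_. 1"] col_carrier_vec[OF i unitaryD(1)[OF W]]
  unfolding spectral_mat_one[OF W] by simp

lemma braket_self_unitary_coords:
  assumes W: "unitary n W" and x: "x \<in> carrier_vec n"
  shows "braket x x = complex_of_real (\<Sum>k<n. (cmod ((adj W *\<^sub>v x)$k))\<^sup>2)"
  using braket_spectral_mat[OF W x, of "\<lambda>_. 1"] x unfolding spectral_mat_one[OF W] by simp

lemma trace_spectral_mat_mult: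
  assumes V: "unitary n V" and Z: "Z \<in> carrier_mat n n"
  shows "trace (spectral_mat n V e * Z)
    = (\<Sum>i<n. complex_of_real (e i) * braket (col V i) (Z *\<^sub>v col V i))"
proof -
  note v = unitaryD[OF V]
  have VZ: "adj V * Z \<in> carrier_mat n n" using mult_carrier_mat[OF v(2) Z] .
  have "spectral_mat n V e * Z = V * (diag_real n e * (adj V * Z))"
    using assoc_mult_mat[OF mult_carrier_mat[OF v(1) diag_real_carrier] v(2) Z]
      assoc_mult_mat[OF v(1) diag_real_carrier VZ] by simp
  hence "trace (spectral_mat n V e * Z) = trace (diag_real n e * (adj V * Z) * V)"
    using trace_mult_comm[OF v(1) mult_carrier_mat[OF diag_real_carrier VZ]] by simp
  also have "diag_real n e * (adj V * Z) * V = diag_real n e * (adj V * Z * V)"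
    by (rule assoc_mult_mat[OF diag_real_carrier VZ v(1)])
  finally show ?thesis
    unfolding trace_diag_real_mult[OF mult_carrier_mat[OF VZ v(1)]]
    using index_adj_mult_mult_diag[OF v(1) Z] by simp
qed

lemma trace_spectral_mat:
  assumes V: "unitary n V"
  shows "trace (spectral_mat n V e) = complex_of_real (\<Sum>i<n. e i)"
  using trace_spectral_mat_mult[OF V one_carrier_mat, of e] unitaryD[OF V]
  by (simp add: braket_col_col_unitary[OF V])

lemma trace_square_spectral_mat_mult:
  fixes e :: "nat \<Rightarrow> real"
  assumes V: "unitary n V" and Y: "Y \<in> carrier_mat n n" "hermitian Y"
  defines "\<rho> \<equiv> spectral_mat n V e"
  shows "trace ((\<rho> * Y) * (\<rho> * Y))
    = (\<Sum>i<n. complex_of_real (e i) * braket (Y *\<^sub>v col V i) (\<rho> *\<^sub>v (Y *\<^sub>v col V i)))"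
proof -
  note v = unitaryD[OF V]
  have \<rho>: "\<rho> \<in> carrier_mat n n" unfolding \<rho>_def using spectral_mat_carrier[OF v(1)] .
  have "(\<rho> * Y) * (\<rho> * Y) = \<rho> * (Y * \<rho> * Y)"
    using \<rho> Y by (simp add: assoc_mult_mat[of _ n n _ n _ n])
  moreover have "braket (col V i) ((Y * \<rho> * Y) *\<^sub>v col V i) = braket (Y *\<^sub>v col V i) (\<rho> *\<^sub>v (Y *\<^sub>v col V i))"
    if i: "i < n" for i
  proof -
    have c: "col V i \<in> carrier_vec n" using col_carrier_vec[OF i v(1)] .
    have "(Y * \<rho> * Y) *\<^sub>v col V i = Y *\<^sub>v (\<rho> *\<^sub>v (Y *\<^sub>v col V i))"
      using \<rho> Y c by (simp add: assoc_mult_mat_vec[of _ n n _ n])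
    thus ?thesis
      using braket_adj[OF Y(1) c, of "\<rho> *\<^sub>v (Y *\<^sub>v col V i)"] Y \<rho> c
      by (simp add: hermitian_def mult_mat_vec_carrier)
  qed
  ultimately show ?thesis
    unfolding \<rho>_def using trace_spectral_mat_mult[OF V, of "Y * \<rho> * Y"] Y \<rho> by (simp add: \<rho>_def)
qed

lemma psd_spectral_mat:
  assumes psd: "psd n \<rho>"
  obtains V e where "unitary n V" "\<rho> = spectral_mat n V e" "\<And>i. i < n \<Longrightarrow> 0 \<le> e i"
proof -
  have \<rho>: "\<rho> \<in> carrier_mat n n" using psd unfolding psd_def by auto
  obtain V e where V: "unitary n V" and \<rho>_eq: "\<rho> = spectral_mat n V e"
    using hermitian_spectral_decomposition[OF \<rho> psd_hermitian[OF psd]] by blast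
  have "0 \<le> e i" if i: "i < n" for i
    using psdD(1)[OF psd col_carrier_vec[OF i unitaryD(1)[OF V]]]
    unfolding \<rho>_eq braket_col_spectral_mat_col[OF V i] by simp
  with V \<rho>_eq that show thesis by blast
qed

section \<open>Tensoring with the identity\<close>

lemma sum_lessThan_mult:
  fixes h :: "nat \<Rightarrow> 'a :: comm_monoid_add"
  shows "(\<Sum>k<a * b. h k) = (\<Sum>q<a. \<Sum>r<b. h (q * b + r))"
proof (induction a)
  case (Suc a)
  have "(\<Sum>k<Suc a * b. h k) = (\<Sum>k\<in>{0..<a * b}. h k) + (\<Sum>k\<in>{a * b..<a * b + b}. h k)"
    by (simp add: lessThan_atLeast0 add.commute sum.atLeastLessThan_concat)
  also have "(\<Sum>k\<in>{a * b..<a * b + b}. h k) = (\<Sum>r\<in>{0..<b}. h (a * b + r))"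
    using sum.shift_bounds_nat_ivl[of h 0 "a * b" b] by (simp add: add.commute)
  finally show ?case using Suc by (simp add: lessThan_atLeast0 mult.commute)
qed simp

lemma kron_dims [simp]:
  "dim_row (kron A B) = dim_row A * dim_row B" "dim_col (kron A B) = dim_col A * dim_col B"
  unfolding kron_def by auto

lemma kron_one_carrier [simp]:
  "B \<in> carrier_mat b b \<Longrightarrow> kron (1\<^sub>m a) B \<in> carrier_mat (a * b) (a * b)"
  unfolding carrier_mat_def by auto

lemma index_kron_one:
  assumes i: "i < a * b" and j: "j < a * b" and B: "B \<in> carrier_mat b b"
  shows "kron (1\<^sub>m a) B $$ (i,j) = (if i div b = j div b then B $$ (i mod b, j mod b) else 0)"
proof -
  have "b > 0" using i by (cases b) auto
  hence "i div b < a" "j div b < a" using i j by (auto simp: div_less_iff_less_mult mult.commute)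
  thus ?thesis unfolding kron_def using B i j by auto
qed

lemma kron_one_mult:
  assumes P: "P \<in> carrier_mat b b" and Q: "Q \<in> carrier_mat b b"
  shows "kron (1\<^sub>m a) P * kron (1\<^sub>m a) Q = kron (1\<^sub>m a) (P * Q)"
proof (rule eq_matI)
  fix i j assume "i < dim_row (kron (1\<^sub>m a) (P * Q))" "j < dim_col (kron (1\<^sub>m a) (P * Q))"
  hence i: "i < a * b" and j: "j < a * b" using P Q by auto
  have b: "b > 0" using i by (cases b) auto
  have block: "q * b + r < a * b" if "q < a" "r < b" for q r
  proof -
    have "q * b + r < Suc q * b" using that by simp
    also have "\<dots> \<le> a * b" using that by (intro mult_le_mono1) simp
    finally show ?thesis .
  qed
  have qr: "(q * b + r) div b = q" "(q * b + r) mod b = r" if "r < b" for q r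
    using that b by auto
  let ?P = "\<lambda>r. P $$ (i mod b, r)" and ?Q = "\<lambda>r. Q $$ (r, j mod b)"
  have "(kron (1\<^sub>m a) P * kron (1\<^sub>m a) Q) $$ (i,j)
      = (\<Sum>k<a * b. kron (1\<^sub>m a) P $$ (i,k) * kron (1\<^sub>m a) Q $$ (k,j))"
    using i j P Q by (simp add: scalar_prod_def lessThan_atLeast0)
  also have "\<dots> = (\<Sum>q<a. \<Sum>r<b. kron (1\<^sub>m a) P $$ (i, q * b + r) * kron (1\<^sub>m a) Q $$ (q * b + r, j))"
    by (rule sum_lessThan_mult)
  also have "\<dots> = (\<Sum>q<a. \<Sum>r<b. (if q = i div b then ?P r else 0) * (if q = j div b then ?Q r else 0))"
    using index_kron_one[OF i block P] index_kron_one[OF block j Q] qr by (intro sum.cong refl) auto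
  also have "\<dots> = (\<Sum>q<a. if q = i div b then (\<Sum>r<b. ?P r * (if q = j div b then ?Q r else 0)) else 0)"
    by (rule sum.cong[OF refl]) auto
  also have "\<dots> = (if i div b = j div b then (\<Sum>r<b. ?P r * ?Q r) else 0)"
    using i b by (simp add: div_less_iff_less_mult mult.commute)
  also have "\<dots> = kron (1\<^sub>m a) (P * Q) $$ (i,j)"
    using index_kron_one[OF i j mult_carrier_mat[OF P Q]] P Q b
    by (simp add: scalar_prod_def lessThan_atLeast0)
  finally show "(kron (1\<^sub>m a) P * kron (1\<^sub>m a) Q) $$ (i,j) = kron (1\<^sub>m a) (P * Q) $$ (i,j)" .
qed (use P Q in auto)

lemma adj_kron_one:
  assumes P: "P \<in> carrier_mat b b"
  shows "adj (kron (1\<^sub>m a) P) = kron (1\<^sub>m a) (adj P)"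
proof (rule eq_matI)
  fix i j assume "i < dim_row (kron (1\<^sub>m a) (adj P))" "j < dim_col (kron (1\<^sub>m a) (adj P))"
  hence i: "i < a * b" and j: "j < a * b" using P by auto
  hence "b > 0" by (cases b) auto
  thus "adj (kron (1\<^sub>m a) P) $$ (i,j) = kron (1\<^sub>m a) (adj P) $$ (i,j)"
    using index_kron_one[OF j i P] index_kron_one[OF i j adj_carrier[OF P]] i j P by auto
qed (use P in auto)

lemma kron_one_diag_real: "kron (1\<^sub>m a) (diag_real b d) = diag_real (a * b) (\<lambda>i. d (i mod b))"
proof (rule eq_matI)
  fix i j assume "i < dim_row (diag_real (a * b) (\<lambda>i. d (i mod b)))"
    "j < dim_col (diag_real (a * b) (\<lambda>i. d (i mod b)))"
  hence i: "i < a * b" and j: "j < a * b" by auto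
  hence "b > 0" by (cases b) auto
  moreover have "i = j \<longleftrightarrow> i div b = j div b \<and> i mod b = j mod b"
    by (metis div_mult_mod_eq)
  ultimately show "kron (1\<^sub>m a) (diag_real b d) $$ (i,j) = diag_real (a * b) (\<lambda>i. d (i mod b)) $$ (i,j)"
    unfolding index_kron_one[OF i j diag_real_carrier] using i j by (auto simp: diag_real_def)
qed auto

lemma kron_one_one: "kron (1\<^sub>m a) (1\<^sub>m b) = 1\<^sub>m (a * b)"
  unfolding one_mat_diag_real[of b] kron_one_diag_real one_mat_diag_real[of "a * b"] ..

lemma unitary_kron_one:
  assumes U: "unitary b U"
  shows "unitary (a * b) (kron (1\<^sub>m a) U)"
proof -
  note u = unitaryD[OF U]
  show ?thesis
    unfolding unitary_def adj_kron_one[OF u(1)] kron_one_mult[OF u(1) u(2)] kron_one_mult[OF u(2) u(1)]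
    using u kron_one_carrier[OF u(1)] by (simp add: kron_one_one)
qed

lemma kron_one_spectral_mat:
  assumes U: "unitary b U"
  shows "kron (1\<^sub>m a) (spectral_mat b U h) = spectral_mat (a * b) (kron (1\<^sub>m a) U) (\<lambda>i. h (i mod b))"
proof -
  note u = unitaryD[OF U]
  have "kron (1\<^sub>m a) (spectral_mat b U h) = kron (1\<^sub>m a) (U * diag_real b h) * kron (1\<^sub>m a) (adj U)"
    by (rule kron_one_mult[OF mult_carrier_mat[OF u(1) diag_real_carrier] u(2), symmetric])
  also have "kron (1\<^sub>m a) (U * diag_real b h) = kron (1\<^sub>m a) U * kron (1\<^sub>m a) (diag_real b h)"
    by (rule kron_one_mult[OF u(1) diag_real_carrier, symmetric])
  finally show ?thesis unfolding kron_one_diag_real adj_kron_one[OF u(1)] .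
qed

section \<open>The generalised inverse square root\<close>

definition pinv_sqrt :: "real \<Rightarrow> real" where
  "pinv_sqrt x = (if x > 0 then 1 / sqrt x else 0)"

lemma pinv_sqrt_nonneg: "0 \<le> pinv_sqrt x"
  unfolding pinv_sqrt_def by simp

lemma pinv_sqrt_pos: "0 < x \<Longrightarrow> 0 < pinv_sqrt x"
  unfolding pinv_sqrt_def by simp

lemma mult_pinv_sqrt_square_le: "x * (pinv_sqrt x)\<^sup>2 \<le> 1"
  unfolding pinv_sqrt_def by (simp add: power_divide)

lemma inv_sqrt_spectral_mat:
  assumes \<sigma>: "\<sigma> \<in> carrier_mat n n" and h\<sigma>: "hermitian \<sigma>"
  obtains U d where "unitary n U" "\<sigma> = spectral_mat n U d"
    "inv_sqrt \<sigma> = spectral_mat n U (\<lambda>i. pinv_sqrt (d i))"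
proof -
  have n: "dim_row \<sigma> = n" using \<sigma> by auto
  have "\<exists>X U d. unitary n U \<and> \<sigma> = spectral_mat n U d \<and>
      X = spectral_mat n U (\<lambda>i. if d i > 0 then 1 / sqrt (d i) else 0)"
    using hermitian_spectral_decomposition[OF \<sigma> h\<sigma>] by blast
  from someI_ex[OF this[folded n]] show thesis
    using that unfolding inv_sqrt_def n pinv_sqrt_def by blast
qed

lemma braket_sandwich_le:
  fixes d :: "nat \<Rightarrow> real"
  assumes W: "unitary n W" and x: "x \<in> carrier_vec n"
  defines "\<tau> \<equiv> spectral_mat n W d"
    and "Y \<equiv> spectral_mat n W (\<lambda>k. pinv_sqrt (d k))"
  shows "Re (braket (Y *\<^sub>v x) (\<tau> *\<^sub>v (Y *\<^sub>v x))) \<le> Re (braket x x)"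
proof -
  \<comment> \<open>in the eigenbasis \<open>W\<close>, \<open>Y \<tau> Y\<close> is diagonal with entries \<open>d\<^sub>k pinv_sqrt (d\<^sub>k)\<^sup>2 \<le> 1\<close>\<close>
  note w = unitaryD[OF W]
  define u where "u = adj W *\<^sub>v x"
  have u: "u \<in> carrier_vec n" unfolding u_def using mult_mat_vec_carrier[OF w(2) x] .
  have Yx: "Y *\<^sub>v x \<in> carrier_vec n"
    unfolding Y_def using mult_mat_vec_carrier[OF spectral_mat_carrier[OF w(1)] x] .
  have "braket (Y *\<^sub>v x) (\<tau> *\<^sub>v (Y *\<^sub>v x))
      = complex_of_real (\<Sum>k<n. d k * (cmod ((adj W *\<^sub>v (Y *\<^sub>v x))$k))\<^sup>2)"
    unfolding \<tau>_def by (rule braket_spectral_mat[OF W Yx])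
  also have "adj W *\<^sub>v (Y *\<^sub>v x) = diag_real n (\<lambda>k. pinv_sqrt (d k)) *\<^sub>v u"
    unfolding Y_def u_def by (rule adj_mult_spectral_mat_mult_vec[OF W x])
  finally have "Re (braket (Y *\<^sub>v x) (\<tau> *\<^sub>v (Y *\<^sub>v x)))
      = (\<Sum>k<n. (d k * (pinv_sqrt (d k))\<^sup>2) * (cmod (u$k))\<^sup>2)"
    using u by (simp add: diag_real_mult_vec norm_mult power_mult_distrib mult.assoc)
  also have "\<dots> \<le> (\<Sum>k<n. 1 * (cmod (u$k))\<^sup>2)"
    by (intro sum_mono mult_right_mono mult_pinv_sqrt_square_le) simp
  also have "\<dots> = Re (braket x x)"
    using braket_self_unitary_coords[OF W x] unfolding u_def by simp
  finally show ?thesis .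
qed

lemma braket_sandwich_pos:
  fixes d :: "nat \<Rightarrow> real"
  assumes W: "unitary n W" and x: "x \<in> carrier_vec n"
  defines "\<tau> \<equiv> spectral_mat n W d"
    and "Y \<equiv> spectral_mat n W (\<lambda>k. pinv_sqrt (d k))"
  assumes pos: "0 < Re (braket x (\<tau> *\<^sub>v x))"
  shows "0 < Re (braket x (Y *\<^sub>v x))"
proof (rule ccontr)
  \<comment> \<open>\<open>pinv_sqrt (d\<^sub>k) > 0\<close> wherever \<open>d\<^sub>k > 0\<close>, so \<open>\<tau>\<close> vanishes wherever \<open>Y\<close> does\<close>
  define u where "u = adj W *\<^sub>v x"
  assume "\<not> 0 < Re (braket x (Y *\<^sub>v x))"
  hence "(\<Sum>k<n. pinv_sqrt (d k) * (cmod (u$k))\<^sup>2) \<le> 0"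
    unfolding Y_def braket_spectral_mat[OF W x] u_def by simp
  hence zero: "pinv_sqrt (d k) * (cmod (u$k))\<^sup>2 = 0" if "k < n" for k
    using that sum_nonneg_eq_0_iff[of "{..<n}" "\<lambda>k. pinv_sqrt (d k) * (cmod (u$k))\<^sup>2"]
    by (simp add: pinv_sqrt_nonneg order_antisym sum_nonneg)
  have "d k * (cmod (u$k))\<^sup>2 \<le> 0" if "k < n" for k
  proof (cases "d k > 0")
    case True
    thus ?thesis using zero[OF that] pinv_sqrt_pos[OF True] by simp
  qed (simp add: mult_nonpos_nonneg)
  hence "(\<Sum>k<n. d k * (cmod (u$k))\<^sup>2) \<le> 0" by (intro sum_nonpos) simp
  hence "Re (braket x (\<tau> *\<^sub>v x)) \<le> 0"
    unfolding \<tau>_def braket_spectral_mat[OF W x] u_def[symmetric] by simp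
  thus False using pos by simp
qed

section \<open>The collision quantity under an operator inequality\<close>

lemma trace_sandwich_square_le:
  fixes d :: "nat \<Rightarrow> real"
  assumes \<rho>: "psd n \<rho>" and W: "unitary n W" and c: "0 \<le> c"
    and le: "loewner_le n \<rho> (complex_of_real c \<cdot>\<^sub>m spectral_mat n W d)"
  defines "Y \<equiv> spectral_mat n W (\<lambda>k. pinv_sqrt (d k))"
  shows "Re (trace ((\<rho> * Y) * (\<rho> * Y))) \<le> c * Re (trace \<rho>)"
proof -
  obtain V e where V: "unitary n V" and \<rho>_eq: "\<rho> = spectral_mat n V e"
    and e: "\<And>i. i < n \<Longrightarrow> 0 \<le> e i"
    using psd_spectral_mat[OF \<rho>] by blast
  note w = unitaryD[OF W] and v = unitaryD[OF V]
  have Y: "Y \<in> carrier_mat n n" "hermitian Y"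
    unfolding Y_def hermitian_def
    using spectral_mat_carrier[OF w(1)] adj_spectral_mat[OF w(1)] by auto
  have q: "Re (braket (Y *\<^sub>v col V i) (\<rho> *\<^sub>v (Y *\<^sub>v col V i))) \<le> c" if i: "i < n" for i
  proof -
    have x: "col V i \<in> carrier_vec n" using col_carrier_vec[OF i v(1)] .
    have "Re (braket (Y *\<^sub>v col V i) (\<rho> *\<^sub>v (Y *\<^sub>v col V i)))
        \<le> c * Re (braket (Y *\<^sub>v col V i) (spectral_mat n W d *\<^sub>v (Y *\<^sub>v col V i)))"
      by (rule braket_loewner_le[OF le mult_mat_vec_carrier[OF Y(1) x]])
    also have "\<dots> \<le> c * Re (braket (col V i) (col V i))"
      unfolding Y_def by (rule mult_left_mono[OF braket_sandwich_le[OF W x] c])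
    finally show ?thesis unfolding braket_col_col_unitary[OF V i] by simp
  qed
  have "Re (trace ((\<rho> * Y) * (\<rho> * Y)))
      = (\<Sum>i<n. e i * Re (braket (Y *\<^sub>v col V i) (\<rho> *\<^sub>v (Y *\<^sub>v col V i))))"
    unfolding \<rho>_eq trace_square_spectral_mat_mult[OF V Y] by (simp add: Re_sum)
  also have "\<dots> \<le> (\<Sum>i<n. e i * c)"
    by (intro sum_mono mult_left_mono q e) simp_all
  also have "\<dots> = c * Re (trace \<rho>)"
    unfolding \<rho>_eq trace_spectral_mat[OF V] by (simp add: sum_distrib_left mult.commute)
  finally show ?thesis .
qed

lemma trace_sandwich_square_pos:
  fixes d :: "nat \<Rightarrow> real"
  assumes \<rho>: "psd n \<rho>" and W: "unitary n W" and c: "0 < c"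
    and le: "loewner_le n \<rho> (complex_of_real c \<cdot>\<^sub>m spectral_mat n W d)"
    and tr: "0 < Re (trace \<rho>)"
  defines "Y \<equiv> spectral_mat n W (\<lambda>k. pinv_sqrt (d k))"
  shows "0 < Re (trace ((\<rho> * Y) * (\<rho> * Y)))"
proof -
  obtain V e where V: "unitary n V" and \<rho>_eq: "\<rho> = spectral_mat n V e"
    and e: "\<And>i. i < n \<Longrightarrow> 0 \<le> e i"
    using psd_spectral_mat[OF \<rho>] by blast
  note w = unitaryD[OF W] and v = unitaryD[OF V]
  have Y: "Y \<in> carrier_mat n n" "hermitian Y"
    unfolding Y_def hermitian_def
    using spectral_mat_carrier[OF w(1)] adj_spectral_mat[OF w(1)] by auto
  define q where "q i = Re (braket (Y *\<^sub>v col V i) (\<rho> *\<^sub>v (Y *\<^sub>v col V i)))" for i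
  have q_nonneg: "0 \<le> q i" if "i < n" for i
    using psdD(1)[OF \<rho> mult_mat_vec_carrier[OF Y(1) col_carrier_vec[OF that v(1)]]]
    unfolding q_def .
  have "\<not> (\<forall>j<n. e j \<le> 0)"
  proof
    assume "\<forall>j<n. e j \<le> 0"
    hence "(\<Sum>j<n. e j) \<le> 0" by (intro sum_nonpos) simp
    thus False using tr unfolding \<rho>_eq trace_spectral_mat[OF V] by simp
  qed
  then obtain i where i: "i < n" and ei: "0 < e i" by (auto simp: not_le)
  \<comment> \<open>the \<open>i\<close>-th term alone is at least \<open>e\<^sub>i\<^sup>2 |\<langle>v\<^sub>i, Y v\<^sub>i\<rangle>|\<^sup>2 > 0\<close>\<close>
  define x where "x = col V i"
  have x: "x \<in> carrier_vec n" unfolding x_def using col_carrier_vec[OF i v(1)] .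
  have Yx: "Y *\<^sub>v x \<in> carrier_vec n" using mult_mat_vec_carrier[OF Y(1) x] .
  have "e i \<le> c * Re (braket x (spectral_mat n W d *\<^sub>v x))"
    using braket_loewner_le[OF le x]
    unfolding x_def \<rho>_eq braket_col_spectral_mat_col[OF V i] by simp
  hence "0 < Re (braket x (spectral_mat n W d *\<^sub>v x))"
    using ei c by (auto intro: zero_less_mult_pos[of c])
  hence S: "0 < Re (braket x (Y *\<^sub>v x))"
    unfolding Y_def by (rule braket_sandwich_pos[OF W x])
  have "e i * (cmod ((adj V *\<^sub>v (Y *\<^sub>v x))$i))\<^sup>2
      \<le> (\<Sum>j<n. e j * (cmod ((adj V *\<^sub>v (Y *\<^sub>v x))$j))\<^sup>2)"
    by (rule member_le_sum) (use i e in auto)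
  also have "\<dots> = q i"
    unfolding q_def x_def[symmetric] \<rho>_eq braket_spectral_mat[OF V Yx] by simp
  also have "(adj V *\<^sub>v (Y *\<^sub>v x))$i = braket x (Y *\<^sub>v x)"
    unfolding x_def by (rule index_adj_mult_vec[OF v(1) i])
  finally have "e i * (cmod (braket x (Y *\<^sub>v x)))\<^sup>2 \<le> q i" .
  moreover have "0 < (cmod (braket x (Y *\<^sub>v x)))\<^sup>2" using S by auto
  ultimately have "0 < q i" using ei by (meson mult_pos_pos less_le_trans)
  hence "0 < e i * q i" using ei by simp
  also have "e i * q i \<le> (\<Sum>j<n. e j * q j)"
    by (rule member_le_sum) (use i e q_nonneg in auto)
  also have "\<dots> = Re (trace ((\<rho> * Y) * (\<rho> * Y)))"
    using trace_square_spectral_mat_mult[OF V Y, of e, folded \<rho>_eq] unfolding q_def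
    by (simp add: Re_sum)
  finally show ?thesis .
qed

theorem lemma15:
  fixes dA dB :: nat and \<rho> \<sigma> :: "complex mat"
  assumes "psd (dA * dB) \<rho>"
    and "0 < Re (trace \<rho>)" and "Re (trace \<rho>) \<le> 1"
    and "psd dB \<sigma>" and "trace \<sigma> = 1"
  shows "D_max (dA * dB) \<rho> (kron (1\<^sub>m dA) \<sigma>)
           \<ge> ereal (log 2 (Re (Gamma_C dA \<rho> \<sigma>)) - log 2 (Re (trace \<rho>)))"
proof -
  have \<sigma>: "\<sigma> \<in> carrier_mat dB dB" using assms(4) unfolding psd_def by auto
  obtain U d where U: "unitary dB U" and \<sigma>_eq: "\<sigma> = spectral_mat dB U d"
    and inv: "inv_sqrt \<sigma> = spectral_mat dB U (\<lambda>i. pinv_sqrt (d i))"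
    using inv_sqrt_spectral_mat[OF \<sigma> psd_hermitian[OF assms(4)]] .
  define W where "W = kron (1\<^sub>m dA) U"
  have W: "unitary (dA * dB) W" unfolding W_def by (rule unitary_kron_one[OF U])
  have \<tau>: "kron (1\<^sub>m dA) \<sigma> = spectral_mat (dA * dB) W (\<lambda>i. d (i mod dB))"
    unfolding \<sigma>_eq W_def by (rule kron_one_spectral_mat[OF U])
  define Y where "Y = spectral_mat (dA * dB) W (\<lambda>i. pinv_sqrt (d (i mod dB)))"
  have \<Gamma>: "Gamma_C dA \<rho> \<sigma> = trace ((\<rho> * Y) * (\<rho> * Y))"
    unfolding Gamma_C_def Let_def inv kron_one_spectral_mat[OF U] Y_def W_def ..
  have "log 2 (Re (Gamma_C dA \<rho> \<sigma>)) - log 2 (Re (trace \<rho>)) \<le> l"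
    if le: "loewner_le (dA * dB) \<rho> (complex_of_real (2 powr l) \<cdot>\<^sub>m kron (1\<^sub>m dA) \<sigma>)" for l
  proof -
    have "0 < Re (Gamma_C dA \<rho> \<sigma>)"
      unfolding \<Gamma> Y_def
      by (rule trace_sandwich_square_pos[OF assms(1) W _ le[unfolded \<tau>] assms(2)]) simp
    moreover have "Re (Gamma_C dA \<rho> \<sigma>) \<le> 2 powr l * Re (trace \<rho>)"
      unfolding \<Gamma> Y_def
      by (rule trace_sandwich_square_le[OF assms(1) W _ le[unfolded \<tau>]]) simp
    ultimately have "log 2 (Re (Gamma_C dA \<rho> \<sigma>)) \<le> log 2 (2 powr l * Re (trace \<rho>))"
      by simp
    thus ?thesis using assms(2) by (simp add: log_mult_pos)
  qed
  thus ?thesis unfolding D_max_def by (auto intro: Inf_greatest)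
qed

end
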